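(* Let $p=p(n)\in[0,1]$ and let $\ell,c$ be positive integers with $q:=\frac{cp}{\ell}\le 1$. Let $k$ be any positive integer and let $\mathcal C$ be any $\ell$-rich collection of edge-colored $k$-uniform hypergraphs on vertex set $[n]$ with colors from $[c]$. Then $$\Pr\left[H\sim \mathcal H^k(n,p)\text{ contains some } C\in\widetilde{\mathcal C}\right]\le \Pr\left[H\sim\mathcal H^k_c(n,q)\text{ contains some }C\in\mathcal C\right].$$
   Context: $\mathcal H^k(n,p)$ is the binomial random $k$-uniform hypergraph on $[n]$: each $k$-subset of $[n]$ is an edge independently with probability $p$. $\mathcal H^k_c(n,q)$ is obtained by taking $H\sim\mathcal H^k(n,q)$ and assigning each edge a color from $[c]$ uniformly and independently at random. A collection $\mathcal C$ of edge-colored $k$-uniform hypergraphs on vertex set $[n]$ with colors in $[c]$ is called $\ell$-rich if for every $C\in\mathcal C$ and every edge $e\in E(C)$ there are at least $\ell$ distinct colors such that recoloring $e$ with that color (keeping all other edges and colors of $C$) yields an element of $\mathcal C$. $\widetilde{\mathcal C}$ denotes the set of uncolored hypergraphs obtained from members of $\mathcal C$ by forgetting the colors. "$H$ contains $C$" for a colored $C$ means $C$ is a subhypergraph of $H$ with the same edge colors. *)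

theory Defs
  imports Complex_Main
begin

definition kedges :: "nat \<Rightarrow> nat \<Rightarrow> nat set set" where
  "kedges n k = {e. e \<subseteq> {1..n} \<and> card e = k}"

definition hypergraphs :: "nat \<Rightarrow> nat \<Rightarrow> nat set set set" where
  "hypergraphs n k = Pow (kedges n k)"

definition colored_hypergraphs :: "nat \<Rightarrow> nat \<Rightarrow> nat \<Rightarrow> (nat set \<times> nat) set set" where
  "colored_hypergraphs n k c =
     {G. G \<subseteq> kedges n k \<times> {1..c} \<and> (\<forall>e a b. (e, a) \<in> G \<longrightarrow> (e, b) \<in> G \<longrightarrow> a = b)}"

definition recolor :: "(nat set \<times> nat) set \<Rightarrow> nat set \<Rightarrow> nat \<Rightarrow> (nat set \<times> nat) set" where
  "recolor C e a = {x \<in> C. fst x \<noteq> e} \<union> {(e, a)}"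

definition rich :: "nat \<Rightarrow> nat \<Rightarrow> (nat set \<times> nat) set set \<Rightarrow> bool" where
  "rich l c \<C> \<longleftrightarrow>
     (\<forall>C\<in>\<C>. \<forall>e\<in>fst ` C. card {a \<in> {1..c}. recolor C e a \<in> \<C>} \<ge> l)"

definition uncolor :: "(nat set \<times> nat) set set \<Rightarrow> nat set set set" where
  "uncolor \<C> = (\<lambda>C. fst ` C) ` \<C>"

definition prob_contains :: "nat \<Rightarrow> nat \<Rightarrow> real \<Rightarrow> nat set set set \<Rightarrow> real" where
  "prob_contains n k p F =
     (\<Sum>H\<in>hypergraphs n k.
        if (\<exists>C\<in>F. C \<subseteq> H)
        then p ^ card H * (1 - p) ^ (card (kedges n k) - card H) else 0)"

definition prob_contains_colored ::
    "nat \<Rightarrow> nat \<Rightarrow> nat \<Rightarrow> real \<Rightarrow> (nat set \<times> nat) set set \<Rightarrow> real" where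
  "prob_contains_colored n k c q F =
     (\<Sum>G\<in>colored_hypergraphs n k c.
        if (\<exists>C\<in>F. C \<subseteq> G)
        then (q / real c) ^ card G * (1 - q) ^ (card (kedges n k) - card G) else 0)"

end

theory Submission
  imports Defs
begin

text \<open>Induction on the set of possible edges, exposing one edge \<open>e\<close> at a time. Conditioning on
  \<open>e\<close>, the uncolored probability splits as \<open>(1 - p) P(A) + p P(D)\<close>, where \<open>A\<close> are the members
  avoiding \<open>e\<close> and \<open>D\<close> all members with \<open>e\<close> deleted; the colored one splits as
  \<open>(1 - q) P(A) + (q / c) \<Sum>\<^sub>a P(D\<^sub>a)\<close>, where \<open>D\<^sub>a\<close> are the members avoiding \<open>e\<close> or giving it
  color \<open>a\<close>, with \<open>e\<close> deleted. For every outcome on the remaining edges, richness gives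
  \<open>(c - l) [A] + l [D] \<le> #{a. [D\<^sub>a]}\<close>: a member that uses \<open>e\<close> can be recolored at \<open>e\<close> in at least
  \<open>l\<close> ways. Since \<open>q / c = p / l\<close> and \<open>1 - p = (1 - q) + (p / l) (c - l)\<close>, the induction step
  follows.\<close>

definition colored_subsets :: "'a set \<Rightarrow> nat \<Rightarrow> ('a \<times> nat) set set" where
  "colored_subsets E c =
     {G. G \<subseteq> E \<times> {1..c} \<and> (\<forall>e a b. (e, a) \<in> G \<longrightarrow> (e, b) \<in> G \<longrightarrow> a = b)}"

definition delete_edge :: "'a \<Rightarrow> ('a \<times> nat) set \<Rightarrow> ('a \<times> nat) set" where
  "delete_edge e C = {x \<in> C. fst x \<noteq> e}"

definition consistent_with :: "'a \<Rightarrow> nat \<Rightarrow> ('a \<times> nat) set set \<Rightarrow> ('a \<times> nat) set set" where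
  "consistent_with e a X = {C\<in>X. e \<notin> fst ` C \<or> (e, a) \<in> C}"

definition contains_some :: "'a set set \<Rightarrow> 'a set \<Rightarrow> bool" where
  "contains_some F H \<longleftrightarrow> (\<exists>C\<in>F. C \<subseteq> H)"

definition contains_prob :: "real \<Rightarrow> 'a set \<Rightarrow> 'a set set \<Rightarrow> real" where
  "contains_prob p E F =
     (\<Sum>H\<in>Pow E. if contains_some F H then p ^ card H * (1 - p) ^ (card E - card H) else 0)"

definition colored_contains_prob :: "nat \<Rightarrow> real \<Rightarrow> 'a set \<Rightarrow> ('a \<times> nat) set set \<Rightarrow> real" where
  "colored_contains_prob c q E F =
     (\<Sum>G\<in>colored_subsets E c.
        if contains_some F G then (q / real c) ^ card G * (1 - q) ^ (card E - card G) else 0)"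

lemma finite_colored_subsets: "finite E \<Longrightarrow> finite (colored_subsets E c)"
  by (rule finite_subset[of _ "Pow (E \<times> {1..c})"]) (auto simp: colored_subsets_def)

lemma colored_subsets_finite_member: "finite E \<Longrightarrow> G \<in> colored_subsets E c \<Longrightarrow> finite G"
  unfolding colored_subsets_def by (auto intro: finite_subset)

lemma card_colored_subset_le:
  assumes "finite E" "G \<in> colored_subsets E c"
  shows "card G \<le> card E"
proof -
  have "inj_on fst G" "fst ` G \<subseteq> E"
    using assms(2) unfolding colored_subsets_def inj_on_def by auto
  then show ?thesis
    using assms(1) by (metis card_image card_mono)
qed

lemma fst_delete_edge: "fst ` delete_edge e C = fst ` C - {e}"
  unfolding delete_edge_def by force

lemma delete_edge_absent: "e \<notin> fst ` C \<Longrightarrow> delete_edge e C = C"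
  unfolding delete_edge_def by force

lemma delete_edge_image_avoiding:
  "delete_edge e ` {C\<in>X. e \<notin> fst ` C} = {C\<in>X. e \<notin> fst ` C}"
proof -
  have "delete_edge e ` {C\<in>X. e \<notin> fst ` C} = id ` {C\<in>X. e \<notin> fst ` C}"
    by (rule image_cong) (simp_all add: delete_edge_absent)
  then show ?thesis
    by simp
qed

lemma delete_edge_colored_subsets:
  "C \<in> colored_subsets (insert e E) c \<Longrightarrow> delete_edge e C \<in> colored_subsets E c"
  unfolding colored_subsets_def delete_edge_def by auto

lemma delete_edge_recolor:
  "f \<noteq> e \<Longrightarrow> delete_edge e (recolor C f b) = recolor (delete_edge e C) f b"
  "delete_edge e (recolor C e b) = delete_edge e C"
  unfolding delete_edge_def recolor_def by auto

lemma mem_fst_recolor_other: "f \<noteq> e \<Longrightarrow> e \<in> fst ` recolor C f b \<longleftrightarrow> e \<in> fst ` C"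
  unfolding recolor_def by force

lemma uncolor_avoiding: "uncolor {C\<in>X. e \<notin> fst ` C} = {H\<in>uncolor X. e \<notin> H}"
  unfolding uncolor_def by auto

lemma uncolor_delete_edge: "uncolor (delete_edge e ` X) = (\<lambda>H. H - {e}) ` uncolor X"
  unfolding uncolor_def by (simp add: image_image fst_delete_edge)

lemma sum_Pow_insert:
  assumes "finite A" "x \<notin> A"
  shows "(\<Sum>X\<in>Pow (insert x A). f X) = (\<Sum>X\<in>Pow A. f X) + (\<Sum>X\<in>Pow A. f (insert x X))"
proof -
  have "inj_on (insert x) (Pow A)"
    using assms(2) by (auto intro!: inj_onI)
  then show ?thesis
    unfolding Pow_insert using assms
    by (subst sum.union_disjoint) (auto simp: sum.reindex)
qed

lemma colored_subsets_insert:
  assumes "e \<notin> E"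
  shows "colored_subsets (insert e E) c
           = colored_subsets E c \<union> (\<lambda>(a, G). insert (e, a) G) ` ({1..c} \<times> colored_subsets E c)"
    (is "?L = ?R")
proof
  show "?L \<subseteq> ?R"
  proof
    fix G assume G: "G \<in> ?L"
    show "G \<in> ?R"
    proof (cases "\<exists>a. (e, a) \<in> G")
      case True
      then obtain a where a: "(e, a) \<in> G" ..
      then have "G - {(e, a)} \<in> colored_subsets E c" "a \<in> {1..c}"
        using G unfolding colored_subsets_def by auto
      moreover have "G = insert (e, a) (G - {(e, a)})"
        using a by blast
      ultimately show ?thesis by blast
    next
      case False
      then show ?thesis
        using G unfolding colored_subsets_def by auto
    qed
  qed
  show "?R \<subseteq> ?L"
    using assms unfolding colored_subsets_def by auto
qed

lemma sum_colored_subsets_insert: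
  assumes "finite E" "e \<notin> E"
  shows "(\<Sum>G\<in>colored_subsets (insert e E) c. f G)
           = (\<Sum>G\<in>colored_subsets E c. f G) + (\<Sum>a=1..c. \<Sum>G\<in>colored_subsets E c. f (insert (e, a) G))"
proof -
  let ?ext = "\<lambda>(a, G). insert (e, a) G"
  have no_e: "(e, a) \<notin> G" if "G \<in> colored_subsets E c" for a G
    using that assms(2) unfolding colored_subsets_def by auto
  have "inj_on ?ext ({1..c} \<times> colored_subsets E c)"
  proof (rule inj_onI, clarify)
    fix a G b G'
    assume G: "G \<in> colored_subsets E c" and G': "G' \<in> colored_subsets E c"
      and eq: "insert (e, a) G = insert (e, b) G'"
    then show "a = b \<and> G = G'"
      using no_e[OF G] no_e[OF G'] by (metis insertE insert_ident insert_iff prod.inject)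
  qed
  moreover have "colored_subsets E c \<inter> ?ext ` ({1..c} \<times> colored_subsets E c) = {}"
    using no_e by auto
  ultimately show ?thesis
    unfolding colored_subsets_insert[OF assms(2)] using finite_colored_subsets[OF assms(1)]
    by (simp add: sum.union_disjoint sum.reindex sum.cartesian_product split_def)
qed

lemma contains_some_Pow_insert:
  assumes "H \<subseteq> E" "e \<notin> E"
  shows "contains_some F H \<longleftrightarrow> contains_some {C\<in>F. e \<notin> C} H"
    and "contains_some F (insert e H) \<longleftrightarrow> contains_some ((\<lambda>C. C - {e}) ` F) H"
  using assms unfolding contains_some_def by auto

lemma contains_prob_insert:
  assumes "finite E" "e \<notin> E"
  shows "contains_prob p (insert e E) F
           = (1 - p) * contains_prob p E {C\<in>F. e \<notin> C} + p * contains_prob p E ((\<lambda>C. C - {e}) ` F)"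
proof -
  let ?w = "\<lambda>H. p ^ card H * (1 - p) ^ (card E - card H)"
  have absent: "(if contains_some F H then p ^ card H * (1 - p) ^ (card (insert e E) - card H) else 0)
      = (1 - p) * (if contains_some {C\<in>F. e \<notin> C} H then ?w H else 0)" if "H \<in> Pow E" for H
  proof -
    have "card H \<le> card E"
      using that assms(1) by (simp add: card_mono)
    then show ?thesis
      using that assms contains_some_Pow_insert(1)[of H E e F] by (simp add: Suc_diff_le)
  qed
  have present: "(if contains_some F (insert e H)
        then p ^ card (insert e H) * (1 - p) ^ (card (insert e E) - card (insert e H)) else 0)
      = p * (if contains_some ((\<lambda>C. C - {e}) ` F) H then ?w H else 0)" if "H \<in> Pow E" for H
  proof -
    have "finite H" "e \<notin> H"
      using that assms by (auto intro: finite_subset)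
    then show ?thesis
      using that assms contains_some_Pow_insert(2)[of H E e F] by simp
  qed
  show ?thesis
    unfolding contains_prob_def sum_Pow_insert[OF assms] sum_distrib_left
    by (rule arg_cong2[where f = "(+)"]; rule sum.cong) (simp_all add: absent present)
qed

lemma colored_subset_color_unique:
  "C \<in> colored_subsets E c \<Longrightarrow> (e, a) \<in> C \<Longrightarrow> (e, b) \<in> C \<Longrightarrow> a = b"
  unfolding colored_subsets_def by blast

lemma contains_some_colored_subsets_insert:
  assumes "G \<in> colored_subsets E c" "e \<notin> E" "X \<subseteq> colored_subsets (insert e E) c"
  shows "contains_some X G \<longleftrightarrow> contains_some {C\<in>X. e \<notin> fst ` C} G"
    and "contains_some X (insert (e, a) G) \<longleftrightarrow> contains_some (delete_edge e ` consistent_with e a X) G"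
proof -
  have no_e: "e \<notin> fst ` G"
    using assms(1,2) unfolding colored_subsets_def by auto
  then show "contains_some X G \<longleftrightarrow> contains_some {C\<in>X. e \<notin> fst ` C} G"
    unfolding contains_some_def by blast
  show "contains_some X (insert (e, a) G) \<longleftrightarrow> contains_some (delete_edge e ` consistent_with e a X) G"
  proof
    assume "contains_some X (insert (e, a) G)"
    then obtain C where C: "C \<in> X" "C \<subseteq> insert (e, a) G"
      unfolding contains_some_def by blast
    have "(e, a) \<in> C" if "e \<in> fst ` C"
      using that C(2) no_e by force
    then have "C \<in> consistent_with e a X"
      using C(1) unfolding consistent_with_def by blast
    moreover have "delete_edge e C \<subseteq> G"
      using C(2) unfolding delete_edge_def by auto
    ultimately show "contains_some (delete_edge e ` consistent_with e a X) G"
      unfolding contains_some_def by blast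
  next
    assume "contains_some (delete_edge e ` consistent_with e a X) G"
    then obtain C where C: "C \<in> X" "e \<notin> fst ` C \<or> (e, a) \<in> C" "delete_edge e C \<subseteq> G"
      unfolding contains_some_def consistent_with_def by blast
    have "C \<subseteq> insert (e, a) G"
    proof
      fix x assume x: "x \<in> C"
      show "x \<in> insert (e, a) G"
      proof (cases "fst x = e")
        case True
        then have "(e, a) \<in> C"
          using x C(2) by force
        then show ?thesis
          using x True C(1) assms(3) colored_subset_color_unique by (metis prod.collapse subsetD insertI1)
      next
        case False
        then show ?thesis
          using x C(3) unfolding delete_edge_def by auto
      qed
    qed
    with C(1) show "contains_some X (insert (e, a) G)"
      unfolding contains_some_def by blast
  qed
qed

lemma colored_contains_prob_insert:
  assumes "finite E" "e \<notin> E" "X \<subseteq> colored_subsets (insert e E) c"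
  shows "colored_contains_prob c q (insert e E) X
           = (1 - q) * colored_contains_prob c q E {C\<in>X. e \<notin> fst ` C}
             + q / real c * (\<Sum>a=1..c. colored_contains_prob c q E (delete_edge e ` consistent_with e a X))"
proof -
  let ?w = "\<lambda>G. (q / real c) ^ card G * (1 - q) ^ (card E - card G)"
  have absent: "(if contains_some X G
        then (q / real c) ^ card G * (1 - q) ^ (card (insert e E) - card G) else 0)
      = (1 - q) * (if contains_some {C\<in>X. e \<notin> fst ` C} G then ?w G else 0)"
    if "G \<in> colored_subsets E c" for G
  proof -
    have "card G \<le> card E"
      using assms(1) that by (rule card_colored_subset_le)
    then show ?thesis
      using assms contains_some_colored_subsets_insert(1)[OF that assms(2,3)] by (simp add: Suc_diff_le)
  qed
  have present: "(if contains_some X (insert (e, a) G)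
        then (q / real c) ^ card (insert (e, a) G) * (1 - q) ^ (card (insert e E) - card (insert (e, a) G))
        else 0)
      = q / real c * (if contains_some (delete_edge e ` consistent_with e a X) G then ?w G else 0)"
    if "G \<in> colored_subsets E c" for G a
  proof -
    have "finite G" "(e, a) \<notin> G"
      using that assms(1,2) colored_subsets_finite_member unfolding colored_subsets_def by auto
    then show ?thesis
      using assms contains_some_colored_subsets_insert(2)[OF that assms(2,3)] by simp
  qed
  show ?thesis
    unfolding colored_contains_prob_def sum_colored_subsets_insert[OF assms(1,2)] sum_distrib_left
    by (rule arg_cong2[where f = "(+)"]; intro sum.cong) (simp_all add: absent present)
qed

lemma rich_delete_edge_image:
  assumes rich: "rich l c X" and invariant: "\<And>C f b. f \<noteq> e \<Longrightarrow> P (recolor C f b) \<longleftrightarrow> P C"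
  shows "rich l c (delete_edge e ` {C\<in>X. P C})"
  unfolding rich_def
proof (intro ballI)
  fix C' f assume C': "C' \<in> delete_edge e ` {C\<in>X. P C}" and f': "f \<in> fst ` C'"
  from C' obtain C where C: "C \<in> X" "P C" "C' = delete_edge e C"
    by blast
  from f' have f: "f \<in> fst ` C" "f \<noteq> e"
    unfolding C(3) fst_delete_edge by simp_all
  have "l \<le> card {b \<in> {1..c}. recolor C f b \<in> X}"
    using rich C(1) f(1) unfolding rich_def by blast
  also have "\<dots> \<le> card {b \<in> {1..c}. recolor C' f b \<in> delete_edge e ` {C\<in>X. P C}}"
    using C invariant[OF f(2)] by (intro card_mono) (auto simp: delete_edge_recolor(1)[OF f(2), symmetric])
  finally show "l \<le> card {b \<in> {1..c}. recolor C' f b \<in> delete_edge e ` {C\<in>X. P C}}" .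
qed

lemma rich_card_consistent_colors:
  assumes rich: "rich l c X" and "C \<in> X" "e \<in> fst ` C" "delete_edge e C \<subseteq> G"
  shows "l \<le> card {a \<in> {1..c}. contains_some (delete_edge e ` consistent_with e a X) G}"
proof -
  have "l \<le> card {b \<in> {1..c}. recolor C e b \<in> X}"
    using rich assms(2,3) unfolding rich_def by blast
  also have "\<dots> \<le> card {a \<in> {1..c}. contains_some (delete_edge e ` consistent_with e a X) G}"
  proof (rule card_mono)
    show "{b \<in> {1..c}. recolor C e b \<in> X}
            \<subseteq> {a \<in> {1..c}. contains_some (delete_edge e ` consistent_with e a X) G}"
    proof (intro subsetI CollectI conjI)
      fix b assume b: "b \<in> {b \<in> {1..c}. recolor C e b \<in> X}"
      then show "b \<in> {1..c}"
        by blast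
      have "recolor C e b \<in> consistent_with e b X"
        using b unfolding consistent_with_def recolor_def by simp
      then have "delete_edge e C \<in> delete_edge e ` consistent_with e b X"
        unfolding delete_edge_recolor(2)[of e C b, symmetric] by (rule imageI)
      with assms(4) show "contains_some (delete_edge e ` consistent_with e b X) G"
        unfolding contains_some_def by blast
    qed
  qed simp
  finally show ?thesis .
qed

lemma rich_count_colors:
  assumes rich: "rich l c X"
  shows "(real c - real l) * of_bool (contains_some {C\<in>X. e \<notin> fst ` C} G)
           + real l * of_bool (contains_some (delete_edge e ` X) G)
         \<le> real (card {a \<in> {1..c}. contains_some (delete_edge e ` consistent_with e a X) G})"
proof (cases "contains_some {C\<in>X. e \<notin> fst ` C} G")
  case True
  then obtain C where C: "C \<in> X" "e \<notin> fst ` C" "C \<subseteq> G"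
    unfolding contains_some_def by blast
  then have "delete_edge e C \<in> delete_edge e ` consistent_with e a X" for a
    unfolding consistent_with_def by blast
  moreover have "delete_edge e C \<in> delete_edge e ` X"
    using C(1) by blast
  ultimately have "contains_some (delete_edge e ` consistent_with e a X) G"
      "contains_some (delete_edge e ` X) G" for a
    using C(2,3) delete_edge_absent unfolding contains_some_def by metis+
  then have "{a \<in> {1..c}. contains_some (delete_edge e ` consistent_with e a X) G} = {1..c}"
    by auto
  with True show ?thesis
    by simp
next
  case no_avoiding: False
  show ?thesis
  proof (cases "contains_some (delete_edge e ` X) G")
    case True
    then obtain C where C: "C \<in> X" "delete_edge e C \<subseteq> G"
      unfolding contains_some_def by blast
    have "e \<in> fst ` C"
    proof (rule ccontr)
      assume "e \<notin> fst ` C"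
      then have "C \<in> {C\<in>X. e \<notin> fst ` C}" "C \<subseteq> G"
        using C by (simp_all add: delete_edge_absent)
      with no_avoiding show False
        unfolding contains_some_def by blast
    qed
    then have "l \<le> card {a \<in> {1..c}. contains_some (delete_edge e ` consistent_with e a X) G}"
      by (rule rich_card_consistent_colors[OF rich C(1) _ C(2)])
    then show ?thesis
      using no_avoiding True by simp
  next
    case False
    with no_avoiding show ?thesis
      by simp
  qed
qed

lemma colored_contains_prob_count:
  assumes rich: "rich l c X" and "0 \<le> q" "q \<le> 1"
  shows "(real c - real l) * colored_contains_prob c q E {C\<in>X. e \<notin> fst ` C}
           + real l * colored_contains_prob c q E (delete_edge e ` X)
         \<le> (\<Sum>a=1..c. colored_contains_prob c q E (delete_edge e ` consistent_with e a X))"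
proof -
  let ?w = "\<lambda>G. (q / real c) ^ card G * (1 - q) ^ (card E - card G)"
  let ?S = "colored_subsets E c"
  let ?D = "\<lambda>a. delete_edge e ` consistent_with e a X"
  have if_zero: "(if P then x else 0) = x * of_bool P" for P and x :: real
    by simp
  have "(real c - real l) * colored_contains_prob c q E {C\<in>X. e \<notin> fst ` C}
          + real l * colored_contains_prob c q E (delete_edge e ` X)
        = (\<Sum>G\<in>?S. ?w G * ((real c - real l) * of_bool (contains_some {C\<in>X. e \<notin> fst ` C} G)
                             + real l * of_bool (contains_some (delete_edge e ` X) G)))"
    unfolding colored_contains_prob_def if_zero sum_distrib_left sum.distrib[symmetric]
    by (rule sum.cong) (simp_all add: distrib_left)
  also have "\<dots> \<le> (\<Sum>G\<in>?S. ?w G * real (card {a \<in> {1..c}. contains_some (?D a) G}))"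
    using assms by (intro sum_mono mult_left_mono rich_count_colors) auto
  also have "\<dots> = (\<Sum>G\<in>?S. \<Sum>a=1..c. ?w G * of_bool (contains_some (?D a) G))"
    by (simp add: sum_distrib_left[symmetric] Int_def)
  also have "\<dots> = (\<Sum>a=1..c. \<Sum>G\<in>?S. ?w G * of_bool (contains_some (?D a) G))"
    by (rule sum.swap)
  also have "\<dots> = (\<Sum>a=1..c. colored_contains_prob c q E (?D a))"
    unfolding colored_contains_prob_def if_zero ..
  finally show ?thesis .
qed

lemma contains_prob_le_colored_contains_prob:
  fixes E :: "nat set set"
  assumes "finite E" and p: "0 \<le> p" "p \<le> 1" and "0 < l" "0 < c" and q: "real c * p / real l \<le> 1"
  shows "X \<subseteq> colored_subsets E c \<Longrightarrow> rich l c X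
           \<Longrightarrow> contains_prob p E (uncolor X) \<le> colored_contains_prob c (real c * p / real l) E X"
  using assms(1)
proof (induction E arbitrary: X rule: finite_induct)
  case empty
  have colored: "colored_subsets {} c = {{}}"
    unfolding colored_subsets_def by auto
  have "contains_some (uncolor X) {} \<longleftrightarrow> contains_some X {}"
    unfolding contains_some_def uncolor_def by force
  then show ?case
    unfolding contains_prob_def colored_contains_prob_def colored by simp
next
  case (insert e E)
  let ?q = "real c * p / real l"
  let ?P = "colored_contains_prob c ?q E"
  define A where "A = {C\<in>X. e \<notin> fst ` C}"
  define D where "D = delete_edge e ` X"
  have deleted: "delete_edge e ` Y \<subseteq> colored_subsets E c" if "Y \<subseteq> X" for Y
    using that insert.prems(1) delete_edge_colored_subsets[of _ e E c] by blast
  have "A \<subseteq> colored_subsets E c"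
    using deleted[of A] unfolding A_def delete_edge_image_avoiding by blast
  moreover have "D \<subseteq> colored_subsets E c"
    using deleted[of X] unfolding D_def by blast
  moreover have "rich l c (delete_edge e ` A)"
    unfolding A_def by (rule rich_delete_edge_image[OF insert.prems(2)]) (simp add: mem_fst_recolor_other)
  then have "rich l c A"
    unfolding A_def delete_edge_image_avoiding .
  moreover have "rich l c D"
    using rich_delete_edge_image[OF insert.prems(2), of e "\<lambda>_. True"] unfolding D_def by simp
  ultimately have IH: "contains_prob p E (uncolor A) \<le> ?P A" "contains_prob p E (uncolor D) \<le> ?P D"
    using insert.IH by blast+
  have q_div_c: "?q / real c = p / real l"
    using assms(5) by simp
  have "?q \<ge> 0"
    using p assms(4,5) by simp
  then have count: "(real c - real l) * ?P A + real l * ?P D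
      \<le> (\<Sum>a=1..c. ?P (delete_edge e ` consistent_with e a X))"
    unfolding A_def D_def by (rule colored_contains_prob_count[OF insert.prems(2) _ q])
  have "contains_prob p (insert e E) (uncolor X)
        = (1 - p) * contains_prob p E (uncolor A) + p * contains_prob p E (uncolor D)"
    unfolding A_def D_def uncolor_avoiding uncolor_delete_edge by (rule contains_prob_insert[OF insert.hyps])
  also have "\<dots> \<le> (1 - p) * ?P A + p * ?P D"
    using IH p by (intro add_mono mult_left_mono) auto
  also have "\<dots> = (1 - ?q) * ?P A + p / real l * ((real c - real l) * ?P A + real l * ?P D)"
    using assms(4) by (simp add: field_simps)
  also have "\<dots> \<le> (1 - ?q) * ?P A + p / real l * (\<Sum>a=1..c. ?P (delete_edge e ` consistent_with e a X))"
    using count p by (intro add_left_mono mult_left_mono) auto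
  also have "\<dots> = colored_contains_prob c ?q (insert e E) X"
    unfolding A_def q_div_c[symmetric] by (rule colored_contains_prob_insert[OF insert.hyps insert.prems(1), symmetric])
  finally show ?case .
qed

theorem theorem2:
  fixes n k l c :: nat and p :: real and \<C> :: "(nat set \<times> nat) set set"
  assumes "0 \<le> p" "p \<le> 1"
    and "0 < l" "0 < c"
    and "real c * p / real l \<le> 1"
    and "0 < k"
    and "\<C> \<subseteq> colored_hypergraphs n k c"
    and "rich l c \<C>"
  shows "prob_contains n k p (uncolor \<C>)
         \<le> prob_contains_colored n k c (real c * p / real l) \<C>"
proof -
  have "finite (kedges n k)"
    by (rule finite_subset[of _ "Pow {1..n}"]) (auto simp: kedges_def)
  moreover have "colored_hypergraphs n k c = colored_subsets (kedges n k) c"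
    unfolding colored_hypergraphs_def colored_subsets_def ..
  moreover have "prob_contains n k p F = contains_prob p (kedges n k) F" for F
    unfolding prob_contains_def contains_prob_def hypergraphs_def contains_some_def ..
  moreover have "prob_contains_colored n k c q F = colored_contains_prob c q (kedges n k) F" for q F
    unfolding prob_contains_colored_def colored_contains_prob_def colored_subsets_def
      colored_hypergraphs_def contains_some_def ..
  ultimately show ?thesis
    using contains_prob_le_colored_contains_prob assms(1-5,7,8) by metis
qed

end
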